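(* Let $\mathcal{A}$ be a primal algebra and let $<$ be a linear order on its universe $A$. Then the class of objects of $\mathbf{OV}_{\mathit{fin}}(\mathcal{A},<)$ has the hereditary property: every substructure of an object of $\mathbf{OV}_{\mathit{fin}}(\mathcal{A},<)$ is itself an object of $\mathbf{OV}_{\mathit{fin}}(\mathcal{A},<)$.
   Context: A primal algebra is a finite algebra with at least two elements in which every finitary operation on its universe is a term operation. For a linear order $<$ on $A$ and a positive integer $n$, the antilexicographic order $\sqsubset$ on $A^n$ is: $(x_1,\dots,x_n)\sqsubset(y_1,\dots,y_n)$ iff there is $s$ with $x_t=y_t$ for all $t>s$ and $x_s<y_s$. For a permutation $\pi$ of $\{1,\dots,n\}$, $\bar x\sqsubset_\pi\bar y$ iff $(x_{\pi(1)},\dots,x_{\pi(n)})\sqsubset(y_{\pi(1)},\dots,y_{\pi(n)})$; $\sqsubseteq_\pi$ is its reflexive version and $\mathcal{A}^n_{\sqsubseteq_\pi}$ is the power algebra $\mathcal{A}^n$ expanded by the relation $\sqsubseteq_\pi$. $\mathbf{OV}_{\mathit{fin}}(\mathcal{A},<)$ is the category whose objects are all structures isomorphic to some $\mathcal{A}^n_{\sqsubseteq_\pi}$ ($n$ a positive integer, $\pi$ a permutation of $\{1,\dots,n\}$) and whose morphisms are embeddings (injective maps preserving the operations and preserving and reflecting the order relation). A substructure is a subset closed under the operations, with the induced operations and order. *)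

theory Defs
  imports Main
begin

text \<open>An algebra is given by a universe A :: 'a set, an arity function
  ar :: 'f => nat on operation symbols, and interpretations
  F :: 'f => 'a list => 'a (F f is applied to argument lists of length ar f).\<close>

definition alg_closed :: "'a set \<Rightarrow> ('f \<Rightarrow> nat) \<Rightarrow> ('f \<Rightarrow> 'a list \<Rightarrow> 'a) \<Rightarrow> bool" where
  "alg_closed A ar F \<longleftrightarrow>
     (\<forall>f xs. length xs = ar f \<and> set xs \<subseteq> A \<longrightarrow> F f xs \<in> A)"

inductive term_op :: "('f \<Rightarrow> nat) \<Rightarrow> ('f \<Rightarrow> 'a list \<Rightarrow> 'a) \<Rightarrow> nat \<Rightarrow> ('a list \<Rightarrow> 'a) \<Rightarrow> bool"
  for ar F n where
  proj: "i < n \<Longrightarrow> term_op ar F n (\<lambda>xs. xs ! i)"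
| comp: "length hs = ar f \<Longrightarrow> (\<forall>h\<in>set hs. term_op ar F n h)
         \<Longrightarrow> term_op ar F n (\<lambda>xs. F f (map (\<lambda>h. h xs) hs))"

definition primal :: "'a set \<Rightarrow> ('f \<Rightarrow> nat) \<Rightarrow> ('f \<Rightarrow> 'a list \<Rightarrow> 'a) \<Rightarrow> bool" where
  "primal A ar F \<longleftrightarrow> finite A \<and> 2 \<le> card A \<and> alg_closed A ar F \<and>
     (\<forall>n \<ge> 1. \<forall>g :: 'a list \<Rightarrow> 'a.
        (\<forall>xs. length xs = n \<and> set xs \<subseteq> A \<longrightarrow> g xs \<in> A) \<longrightarrow>
        (\<exists>t. term_op ar F n t \<and> (\<forall>xs. length xs = n \<and> set xs \<subseteq> A \<longrightarrow> t xs = g xs)))"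

definition lin_order_on :: "'a set \<Rightarrow> ('a \<Rightarrow> 'a \<Rightarrow> bool) \<Rightarrow> bool" where
  "lin_order_on A lt \<longleftrightarrow>
     (\<forall>x\<in>A. \<not> lt x x) \<and>
     (\<forall>x\<in>A. \<forall>y\<in>A. \<forall>z\<in>A. lt x y \<longrightarrow> lt y z \<longrightarrow> lt x z) \<and>
     (\<forall>x\<in>A. \<forall>y\<in>A. x \<noteq> y \<longrightarrow> lt x y \<or> lt y x)"

definition antilex :: "('a \<Rightarrow> 'a \<Rightarrow> bool) \<Rightarrow> nat \<Rightarrow> 'a list \<Rightarrow> 'a list \<Rightarrow> bool" where
  "antilex lt n xs ys \<longleftrightarrow>
     (\<exists>s<n. (\<forall>t. s < t \<and> t < n \<longrightarrow> xs ! t = ys ! t) \<and> lt (xs ! s) (ys ! s))"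

definition permute_tuple :: "nat \<Rightarrow> (nat \<Rightarrow> nat) \<Rightarrow> 'a list \<Rightarrow> 'a list" where
  "permute_tuple n \<pi> xs = map (\<lambda>i. xs ! \<pi> i) [0..<n]"

definition antilex_le_perm :: "('a \<Rightarrow> 'a \<Rightarrow> bool) \<Rightarrow> nat \<Rightarrow> (nat \<Rightarrow> nat) \<Rightarrow> 'a list \<Rightarrow> 'a list \<Rightarrow> bool" where
  "antilex_le_perm lt n \<pi> xs ys \<longleftrightarrow>
     xs = ys \<or> antilex lt n (permute_tuple n \<pi> xs) (permute_tuple n \<pi> ys)"

record ('f, 'b) ostruct =
  univ :: "'b set"
  ops :: "'f \<Rightarrow> 'b list \<Rightarrow> 'b"
  ord :: "'b \<Rightarrow> 'b \<Rightarrow> bool"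

definition pow_struct :: "'a set \<Rightarrow> ('f \<Rightarrow> 'a list \<Rightarrow> 'a) \<Rightarrow> ('a \<Rightarrow> 'a \<Rightarrow> bool)
    \<Rightarrow> nat \<Rightarrow> (nat \<Rightarrow> nat) \<Rightarrow> ('f, 'a list) ostruct" where
  "pow_struct A F lt n \<pi> =
     \<lparr> univ = {xs. length xs = n \<and> set xs \<subseteq> A},
       ops = (\<lambda>f args. map (\<lambda>i. F f (map (\<lambda>x. x ! i) args)) [0..<n]),
       ord = antilex_le_perm lt n \<pi> \<rparr>"

definition struct_closed :: "('f \<Rightarrow> nat) \<Rightarrow> ('f, 'b) ostruct \<Rightarrow> bool" where
  "struct_closed ar S \<longleftrightarrow>
     (\<forall>f args. length args = ar f \<and> set args \<subseteq> univ S \<longrightarrow> ops S f args \<in> univ S)"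

definition struct_iso :: "('f \<Rightarrow> nat) \<Rightarrow> ('f, 'b) ostruct \<Rightarrow> ('f, 'c) ostruct \<Rightarrow> bool" where
  "struct_iso ar S T \<longleftrightarrow> struct_closed ar S \<and> struct_closed ar T \<and>
     (\<exists>h. bij_betw h (univ S) (univ T) \<and>
        (\<forall>f args. length args = ar f \<and> set args \<subseteq> univ S \<longrightarrow>
            h (ops S f args) = ops T f (map h args)) \<and>
        (\<forall>x\<in>univ S. \<forall>y\<in>univ S. ord S x y \<longleftrightarrow> ord T (h x) (h y)))"

definition OV_fin_object :: "'a set \<Rightarrow> ('f \<Rightarrow> nat) \<Rightarrow> ('f \<Rightarrow> 'a list \<Rightarrow> 'a)
    \<Rightarrow> ('a \<Rightarrow> 'a \<Rightarrow> bool) \<Rightarrow> ('f, 'b) ostruct \<Rightarrow> bool" where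
  "OV_fin_object A ar F lt S \<longleftrightarrow>
     (\<exists>n \<ge> 1. \<exists>\<pi>. bij_betw \<pi> {0..<n} {0..<n} \<and> struct_iso ar S (pow_struct A F lt n \<pi>))"

definition sub_universe :: "('f \<Rightarrow> nat) \<Rightarrow> ('f, 'b) ostruct \<Rightarrow> 'b set \<Rightarrow> bool" where
  "sub_universe ar S B \<longleftrightarrow> B \<subseteq> univ S \<and> B \<noteq> {} \<and>
     (\<forall>f args. length args = ar f \<and> set args \<subseteq> B \<longrightarrow> ops S f args \<in> B)"

end

theory Submission
  imports Defs
begin

(*
  A subuniverse D of a power A^n of a primal algebra is diagonal: it contains every tuple that
  respects the equalities between the columns of D, since such a tuple is obtained by applying
  to the columns of D a term operation that primality provides. Keeping one coordinate from each
  class of equal columns is therefore a bijection from D onto a full power A^k, and it commutes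
  with the coordinatewise operations. If the kept coordinate is the last one of its class in the
  pi-permuted order, it is the one at which two distinct tuples of D last differ, so the bijection
  also carries the antilexicographic order of A^n restricted to D onto that of A^k.
*)

definition pointwise :: "nat \<Rightarrow> ('a list \<Rightarrow> 'a) \<Rightarrow> 'a list list \<Rightarrow> 'a list" where
  "pointwise n g xss = map (\<lambda>i. g (map (\<lambda>xs. xs ! i) xss)) [0..<n]"

lemma pow_struct_simps [simp]:
  "univ (pow_struct A F lt n \<pi>) = {xs. length xs = n \<and> set xs \<subseteq> A}"
  "ops (pow_struct A F lt n \<pi>) f = pointwise n (F f)"
  "ord (pow_struct A F lt n \<pi>) = antilex_le_perm lt n \<pi>"
  by (simp_all add: pow_struct_def pointwise_def fun_eq_iff)

lemma nth_permute_tuple: "p < n \<Longrightarrow> permute_tuple n \<pi> x ! p = x ! \<pi> p"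
  by (simp add: permute_tuple_def)

lemma permute_tuple_id: "length xs = n \<Longrightarrow> permute_tuple n id xs = xs"
  by (auto simp: permute_tuple_def intro: nth_equalityI)

lemma struct_closed_pow_struct:
  assumes "alg_closed A ar F"
  shows "struct_closed ar (pow_struct A F lt n \<pi>)"
  unfolding struct_closed_def
proof (intro allI impI)
  fix f and args :: "'a list list"
  assume args: "length args = ar f \<and> set args \<subseteq> univ (pow_struct A F lt n \<pi>)"
  have "F f (map (\<lambda>xs. xs ! i) args) \<in> A" if "i < n" for i
  proof -
    have "set (map (\<lambda>xs. xs ! i) args) \<subseteq> A"
      using args that by (auto dest!: nth_mem)
    then show ?thesis
      using assms args unfolding alg_closed_def by simp
  qed
  then show "ops (pow_struct A F lt n \<pi>) f args \<in> univ (pow_struct A F lt n \<pi>)"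
    by (auto simp: pointwise_def)
qed

lemma struct_iso_trans:
  assumes "struct_iso ar S T" and "struct_iso ar T U"
  shows "struct_iso ar S U"
proof -
  obtain g where g: "bij_betw g (univ S) (univ T)"
    and g_ops: "\<And>f args. length args = ar f \<Longrightarrow> set args \<subseteq> univ S \<Longrightarrow>
                 g (ops S f args) = ops T f (map g args)"
    and g_ord: "\<And>x y. x \<in> univ S \<Longrightarrow> y \<in> univ S \<Longrightarrow> ord S x y \<longleftrightarrow> ord T (g x) (g y)"
    using assms(1) unfolding struct_iso_def by blast
  obtain h where h: "bij_betw h (univ T) (univ U)"
    and h_ops: "\<And>f args. length args = ar f \<Longrightarrow> set args \<subseteq> univ T \<Longrightarrow>
                 h (ops T f args) = ops U f (map h args)"
    and h_ord: "\<And>x y. x \<in> univ T \<Longrightarrow> y \<in> univ T \<Longrightarrow> ord T x y \<longleftrightarrow> ord U (h x) (h y)"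
    using assms(2) unfolding struct_iso_def by blast
  have g_into: "set (map g args) \<subseteq> univ T" if "set args \<subseteq> univ S" for args
    using g that by (auto simp: bij_betw_def)
  show ?thesis
    unfolding struct_iso_def
  proof (intro conjI exI[of _ "h \<circ> g"] allI impI ballI)
    show "struct_closed ar S" "struct_closed ar U"
      using assms unfolding struct_iso_def by blast+
    show "bij_betw (h \<circ> g) (univ S) (univ U)"
      using g h by (rule bij_betw_trans)
    fix f args assume "length args = ar f \<and> set args \<subseteq> univ S"
    then show "(h \<circ> g) (ops S f args) = ops U f (map (h \<circ> g) args)"
      using g_ops h_ops g_into by simp
  next
    fix x y assume "x \<in> univ S" "y \<in> univ S"
    moreover have "g x \<in> univ T" "g y \<in> univ T"
      using calculation g by (auto simp: bij_betw_def)
    ultimately show "ord S x y \<longleftrightarrow> ord U ((h \<circ> g) x) ((h \<circ> g) y)"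
      using g_ord h_ord by simp
  qed
qed

lemma struct_iso_sub_universe:
  assumes iso: "struct_iso ar S T" and B: "sub_universe ar S B"
  obtains C where "sub_universe ar T C" and "struct_iso ar (S\<lparr>univ := B\<rparr>) (T\<lparr>univ := C\<rparr>)"
proof -
  obtain h where h: "bij_betw h (univ S) (univ T)"
    and h_ops: "\<And>f args. length args = ar f \<Longrightarrow> set args \<subseteq> univ S \<Longrightarrow>
                 h (ops S f args) = ops T f (map h args)"
    and h_ord: "\<And>x y. x \<in> univ S \<Longrightarrow> y \<in> univ S \<Longrightarrow> ord S x y \<longleftrightarrow> ord T (h x) (h y)"
    using iso unfolding struct_iso_def by blast
  have BS: "B \<subseteq> univ S" and B_ne: "B \<noteq> {}"
    and B_closed: "\<And>f args. length args = ar f \<Longrightarrow> set args \<subseteq> B \<Longrightarrow> ops S f args \<in> B"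
    using B unfolding sub_universe_def by blast+
  have hB: "bij_betw h B (h ` B)"
    using h BS by (auto simp: bij_betw_def intro: inj_on_subset)
  have image_closed: "ops T f args \<in> h ` B" if "length args = ar f" "set args \<subseteq> h ` B" for f args
  proof -
    define args' where "args' = map (inv_into B h) args"
    have "set args' \<subseteq> B" and "map h args' = args"
      using that(2) by (auto simp: args'_def inv_into_into f_inv_into_f intro!: map_idI)
    moreover have "length args' = ar f"
      using that(1) by (simp add: args'_def)
    ultimately have "ops T f args = h (ops S f args')"
      using h_ops BS by auto
    with \<open>set args' \<subseteq> B\<close> \<open>length args' = ar f\<close> show ?thesis
      using B_closed by blast
  qed
  show ?thesis
  proof (rule that)
    show "sub_universe ar T (h ` B)"
      using h BS B_ne image_closed unfolding sub_universe_def bij_betw_def by blast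
    show "struct_iso ar (S\<lparr>univ := B\<rparr>) (T\<lparr>univ := h ` B\<rparr>)"
      unfolding struct_iso_def struct_closed_def
    proof (intro conjI exI[of _ h] allI impI ballI)
      fix f args assume "length args = ar f \<and> set args \<subseteq> univ (S\<lparr>univ := B\<rparr>)"
      then show "h (ops (S\<lparr>univ := B\<rparr>) f args) = ops (T\<lparr>univ := h ` B\<rparr>) f (map h args)"
        using h_ops BS by auto
    next
      fix x y assume "x \<in> univ (S\<lparr>univ := B\<rparr>)" "y \<in> univ (S\<lparr>univ := B\<rparr>)"
      then show "ord (S\<lparr>univ := B\<rparr>) x y \<longleftrightarrow> ord (T\<lparr>univ := h ` B\<rparr>) (h x) (h y)"
        using h_ord BS by auto
    qed (use B_closed image_closed hB in auto)
  qed
qed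

definition same_columns :: "'a list set \<Rightarrow> nat \<Rightarrow> nat \<Rightarrow> bool" where
  "same_columns D c c' \<longleftrightarrow> (\<forall>xs\<in>D. xs ! c = xs ! c')"

lemma same_columns_refl: "same_columns D c c"
  and same_columns_sym: "same_columns D c c' \<Longrightarrow> same_columns D c' c"
  and same_columns_trans: "same_columns D c c' \<Longrightarrow> same_columns D c' c'' \<Longrightarrow> same_columns D c c''"
  by (auto simp: same_columns_def)

lemma sub_universe_pow_struct_term_op:
  fixes F :: "'f \<Rightarrow> 'a list \<Rightarrow> 'a"
  assumes D: "sub_universe ar (pow_struct A F lt n \<pi>) D"
    and t: "term_op ar F m t" and bs: "length bs = m" "set bs \<subseteq> D"
  shows "pointwise n t bs \<in> D"
  using t
proof (induction rule: term_op.induct)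
  case (proj i)
  then have "bs ! i \<in> D"
    using bs by auto
  moreover have "length (bs ! i) = n"
    using calculation D by (auto simp: sub_universe_def)
  ultimately have "pointwise n (\<lambda>xs. xs ! i) bs = bs ! i"
    using proj bs by (auto simp: pointwise_def intro: nth_equalityI)
  with \<open>bs ! i \<in> D\<close> show ?case
    by simp
next
  case (comp hs f)
  have "set (map (\<lambda>h. pointwise n h bs) hs) \<subseteq> D"
    using comp.IH by auto
  then have "pointwise n (F f) (map (\<lambda>h. pointwise n h bs) hs) \<in> D"
    using D comp.hyps by (auto simp: sub_universe_def)
  moreover have "pointwise n (F f) (map (\<lambda>h. pointwise n h bs) hs)
      = pointwise n (\<lambda>xs. F f (map (\<lambda>h. h xs) hs)) bs"
    by (simp add: pointwise_def comp_def)
  ultimately show ?case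
    by simp
qed

lemma primal_sub_universe_pow_struct_diagonal:
  assumes primal: "primal A ar F"
    and D: "sub_universe ar (pow_struct A F lt n \<pi>) D"
    and x: "length x = n" "set x \<subseteq> A"
    and x_respects: "\<And>c c'. c < n \<Longrightarrow> c' < n \<Longrightarrow> same_columns D c c' \<Longrightarrow> x ! c = x ! c'"
  shows "x \<in> D"
proof -
  have D_tuples: "D \<subseteq> {xs. set xs \<subseteq> A \<and> length xs = n}"
    using D by (auto simp: sub_universe_def)
  moreover have "finite {xs. set xs \<subseteq> A \<and> length xs = n}"
    using primal by (simp add: primal_def finite_lists_length_eq)
  ultimately obtain bs where bs: "set bs = D"
    using finite_list finite_subset by metis
  define m where "m = length bs"
  have "m \<ge> 1"
    using D bs by (cases bs) (auto simp: m_def sub_universe_def)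
  define col where "col i = map (\<lambda>b. b ! i) bs" for i
  \<comment> \<open>The wanted operation sends the i-th column of D to x ! i, which is well defined because x
      respects the equalities between columns; off the columns any value in A will do.\<close>
  define g where "g ys = (if \<exists>c<n. ys = col c then x ! (SOME c. c < n \<and> ys = col c) else ys ! 0)"
    for ys
  have "g ys \<in> A" if "length ys = m" "set ys \<subseteq> A" for ys
  proof (cases "\<exists>c<n. ys = col c")
    case True
    then have "(SOME c. c < n \<and> ys = col c) < n"
      by (metis (mono_tags, lifting) someI_ex)
    then show ?thesis
      using True x by (auto simp: g_def)
  next
    case False
    moreover have "ys ! 0 \<in> set ys"
      using that \<open>m \<ge> 1\<close> by simp
    ultimately show ?thesis
      using that by (auto simp only: g_def if_False)
  qed
  then obtain t where t: "term_op ar F m t"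
    and t_g: "\<And>ys. length ys = m \<Longrightarrow> set ys \<subseteq> A \<Longrightarrow> t ys = g ys"
    using primal \<open>m \<ge> 1\<close> unfolding primal_def by metis
  have "pointwise n t bs \<in> D"
    using sub_universe_pow_struct_term_op[OF D t] bs by (simp add: m_def)
  moreover have "pointwise n t bs = x"
  proof (rule nth_equalityI)
    fix i assume "i < length (pointwise n t bs)"
    then have i: "i < n"
      by (simp add: pointwise_def)
    define c where "c = (SOME c. c < n \<and> col i = col c)"
    have c: "c < n" "col i = col c"
      using someI[of "\<lambda>c. c < n \<and> col i = col c" i] i by (auto simp: c_def)
    then have "same_columns D c i"
      by (auto simp: same_columns_def col_def bs[symmetric] map_eq_conv)
    then have "x ! c = x ! i"
      using x_respects c i by blast
    moreover have "length (col i) = m" "set (col i) \<subseteq> A"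
      using D_tuples bs i by (fastforce simp: col_def m_def)+
    ultimately show "pointwise n t bs ! i = x ! i"
      using i t_g by (auto simp: pointwise_def g_def c_def col_def)
  qed (use x in \<open>simp add: pointwise_def\<close>)
  ultimately show ?thesis
    by simp
qed

locale diagonal_subset =
  fixes A :: "'a set" and D :: "'a list set" and n :: nat and \<pi> :: "nat \<Rightarrow> nat"
  assumes bij_\<pi>: "bij_betw \<pi> {0..<n} {0..<n}"
    and n_pos: "n \<ge> 1"
    and D_tuples: "D \<subseteq> {xs. length xs = n \<and> set xs \<subseteq> A}"
    and diagonal: "\<And>x. length x = n \<Longrightarrow> set x \<subseteq> A \<Longrightarrow>
        (\<And>c c'. c < n \<Longrightarrow> c' < n \<Longrightarrow> same_columns D c c' \<Longrightarrow> x ! c = x ! c') \<Longrightarrow> x \<in> D"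
begin

text \<open>Positions are taken in the \<pi>-permuted order. Each class of positions carrying equal
  columns of D is represented by its largest member, the one that decides an antilexicographic
  comparison within D.\<close>

definition representatives :: "nat set" where
  "representatives = {p. p < n \<and> (\<forall>p'<n. same_columns D (\<pi> p') (\<pi> p) \<longrightarrow> p' \<le> p)}"

definition rep_list :: "nat list" where
  "rep_list = sorted_list_of_set representatives"

definition dim :: nat where
  "dim = length rep_list"

definition compress :: "'a list \<Rightarrow> 'a list" where
  "compress x = map (\<lambda>p. x ! \<pi> p) rep_list"

lemma \<pi>_less: "p < n \<Longrightarrow> \<pi> p < n"
  using bij_\<pi> by (auto simp: bij_betw_def)

lemma finite_representatives: "finite representatives"
  and representatives_less: "p \<in> representatives \<Longrightarrow> p < n"
  by (auto simp: representatives_def)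

lemma set_rep_list: "set rep_list = representatives"
  and distinct_rep_list: "distinct rep_list"
  using finite_representatives by (auto simp: rep_list_def)

lemma rep_list_nth: "j < dim \<Longrightarrow> rep_list ! j \<in> representatives"
  unfolding dim_def using set_rep_list nth_mem by blast

lemma rep_list_nth_less: "j < dim \<Longrightarrow> rep_list ! j < n"
  using rep_list_nth representatives_less by blast

lemma rep_list_less_iff:
  assumes "i < dim" "j < dim"
  shows "rep_list ! i < rep_list ! j \<longleftrightarrow> i < j"
proof -
  have sorted: "sorted_wrt (<) rep_list"
    unfolding rep_list_def by (rule strict_sorted_list_of_set)
  have less: "rep_list ! i' < rep_list ! j'" if "i' < j'" "j' < dim" for i' j'
    using sorted_wrt_nth_less[OF sorted that(1)] that by (simp add: dim_def)
  show ?thesis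
    using less[of i j] less[of j i] assms by (cases i j rule: linorder_cases) auto
qed

lemma representative_index: "p \<in> representatives \<Longrightarrow> \<exists>j<dim. rep_list ! j = p"
  using set_rep_list by (metis in_set_conv_nth dim_def)

lemma ex_representative:
  assumes c: "c < n"
  shows "\<exists>p\<in>representatives. same_columns D (\<pi> p) c"
proof -
  define S where "S = {p. p < n \<and> same_columns D (\<pi> p) c}"
  obtain q where "q < n" "\<pi> q = c"
    using bij_\<pi> c by (metis atLeastLessThan_iff bij_betw_iff_bijections zero_le)
  then have "q \<in> S"
    by (auto simp: S_def same_columns_refl)
  moreover have "finite S"
    by (auto simp: S_def)
  ultimately have max_S: "Max S \<in> S" "\<And>p. p \<in> S \<Longrightarrow> p \<le> Max S"
    using Max_in by auto
  have "Max S \<in> representatives"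
    unfolding representatives_def
  proof (intro CollectI conjI allI impI)
    show "Max S < n"
      using max_S by (simp add: S_def)
    fix p' assume "p' < n" "same_columns D (\<pi> p') (\<pi> (Max S))"
    then show "p' \<le> Max S"
      using max_S same_columns_trans by (fastforce simp: S_def)
  qed
  with max_S show ?thesis
    by (auto simp: S_def)
qed

lemma representative_maximal:
  "p \<in> representatives \<Longrightarrow> p' < n \<Longrightarrow> same_columns D (\<pi> p') (\<pi> p) \<Longrightarrow> p' \<le> p"
  unfolding representatives_def by auto

lemma representative_unique:
  "p \<in> representatives \<Longrightarrow> p' \<in> representatives \<Longrightarrow> same_columns D (\<pi> p) (\<pi> p') \<Longrightarrow> p = p'"
  using representative_maximal[of p p'] representative_maximal[of p' p]
    representatives_less same_columns_sym by fastforce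

lemma dim_pos: "dim \<ge> 1"
proof -
  obtain p where "p \<in> representatives"
    using ex_representative[of 0] n_pos by auto
  then have "rep_list \<noteq> []"
    using set_rep_list by auto
  then show ?thesis
    by (simp add: dim_def Suc_le_eq)
qed

lemma length_compress: "length (compress x) = dim"
  by (simp add: compress_def dim_def)

lemma nth_compress: "j < dim \<Longrightarrow> compress x ! j = x ! \<pi> (rep_list ! j)"
  by (simp add: compress_def dim_def)

lemma inj_on_compress: "inj_on compress D"
proof
  fix x y assume xy: "x \<in> D" "y \<in> D" "compress x = compress y"
  show "x = y"
  proof (rule nth_equalityI)
    show "length x = length y"
      using xy D_tuples by auto
    fix c assume "c < length x"
    then have "c < n"
      using xy D_tuples by auto
    then obtain p where p: "p \<in> representatives" "same_columns D (\<pi> p) c"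
      using ex_representative by blast
    obtain j where "j < dim" "rep_list ! j = p"
      using representative_index[OF p(1)] by blast
    then have "x ! \<pi> p = y ! \<pi> p"
      using xy(3) nth_compress by metis
    then show "x ! c = y ! c"
      using p(2) xy by (simp add: same_columns_def)
  qed
qed

lemma compress_in_tuples: "x \<in> D \<Longrightarrow> compress x \<in> {z. length z = dim \<and> set z \<subseteq> A}"
proof -
  assume x: "x \<in> D"
  have "x ! \<pi> p \<in> A" if "p \<in> set rep_list" for p
  proof -
    have "\<pi> p < n"
      using that set_rep_list representatives_less \<pi>_less by blast
    then show ?thesis
      using x D_tuples nth_mem by blast
  qed
  then show ?thesis
    by (auto simp: dim_def compress_def)
qed

lemma tuples_subset_compress_image:
  assumes z: "length z = dim" "set z \<subseteq> A"
  shows "z \<in> compress ` D"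
proof -
  \<comment> \<open>Position c of the preimage is read off at the index of the representative of its class.\<close>
  define J where "J c = (SOME j. j < dim \<and> same_columns D (\<pi> (rep_list ! j)) c)" for c
  have J: "J c < dim \<and> same_columns D (\<pi> (rep_list ! J c)) c" if c: "c < n" for c
  proof -
    obtain p where p: "p \<in> representatives" "same_columns D (\<pi> p) c"
      using ex_representative[OF c] by blast
    obtain j where "j < dim" "rep_list ! j = p"
      using representative_index[OF p(1)] by blast
    with p(2) have "j < dim \<and> same_columns D (\<pi> (rep_list ! j)) c"
      by simp
    then show ?thesis
      unfolding J_def by (rule someI)
  qed
  define x where "x = map (\<lambda>c. z ! J c) [0..<n]"
  have "x \<in> D"
  proof (rule diagonal)
    show "length x = n" "set x \<subseteq> A"
      using J z by (auto simp: x_def)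
    fix c c' assume cc': "c < n" "c' < n" "same_columns D c c'"
    then have "same_columns D (\<pi> (rep_list ! j)) c \<longleftrightarrow> same_columns D (\<pi> (rep_list ! j)) c'"
      for j
      using same_columns_trans same_columns_sym by blast
    then have "J c = J c'"
      by (simp add: J_def)
    then show "x ! c = x ! c'"
      using cc' by (simp add: x_def)
  qed
  moreover have "compress x = z"
  proof (rule nth_equalityI)
    show "length (compress x) = length z"
      using z by (simp add: length_compress)
    fix j assume "j < length (compress x)"
    then have j: "j < dim"
      by (simp add: length_compress)
    then have c: "\<pi> (rep_list ! j) < n"
      using rep_list_nth_less \<pi>_less by blast
    have "rep_list ! J (\<pi> (rep_list ! j)) = rep_list ! j"
      using J[OF c] j rep_list_nth representative_unique by blast
    then have "J (\<pi> (rep_list ! j)) = j"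
      using distinct_rep_list J[OF c] j by (simp add: dim_def nth_eq_iff_index_eq)
    then show "compress x ! j = z ! j"
      using c j by (simp add: x_def nth_compress)
  qed
  ultimately show ?thesis
    by blast
qed

lemma bij_betw_compress: "bij_betw compress D {z. length z = dim \<and> set z \<subseteq> A}"
  unfolding bij_betw_def
  using inj_on_compress compress_in_tuples tuples_subset_compress_image by blast

lemma compress_pointwise:
  assumes "\<forall>xs\<in>set xss. length xs = n"
  shows "compress (pointwise n g xss) = pointwise dim g (map compress xss)"
proof (rule nth_equalityI)
  fix j assume "j < length (compress (pointwise n g xss))"
  then have j: "j < dim"
    by (simp add: length_compress)
  then have "\<pi> (rep_list ! j) < n"
    using rep_list_nth_less \<pi>_less by blast
  then have "compress (pointwise n g xss) ! j = g (map (\<lambda>xs. xs ! \<pi> (rep_list ! j)) xss)"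
    using j by (simp add: pointwise_def nth_compress)
  also have "\<dots> = pointwise dim g (map compress xss) ! j"
    using j by (simp add: pointwise_def nth_compress cong: map_cong)
  finally show "compress (pointwise n g xss) ! j = pointwise dim g (map compress xss) ! j" .
qed (simp add: length_compress pointwise_def)

lemma antilex_compress_iff:
  assumes irrefl: "\<forall>a\<in>A. \<not> lt a a" and x: "x \<in> D" and y: "y \<in> D"
  shows "antilex lt n (permute_tuple n \<pi> x) (permute_tuple n \<pi> y) \<longleftrightarrow>
         antilex lt dim (compress x) (compress y)"
proof
  assume "antilex lt n (permute_tuple n \<pi> x) (permute_tuple n \<pi> y)"
  then obtain s where s: "s < n"
    and above: "\<And>t. s < t \<Longrightarrow> t < n \<Longrightarrow> x ! \<pi> t = y ! \<pi> t"
    and less: "lt (x ! \<pi> s) (y ! \<pi> s)"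
    unfolding antilex_def by (auto simp: nth_permute_tuple)
  obtain p where p: "p \<in> representatives" "same_columns D (\<pi> p) (\<pi> s)"
    using ex_representative[OF \<pi>_less[OF s]] by blast
  \<comment> \<open>x and y differ at position s, hence at every position of its class; so s is the
      largest one, i.e. the representative.\<close>
  have "\<not> s < p"
  proof
    assume "s < p"
    then have "x ! \<pi> p = y ! \<pi> p"
      using above p(1) representatives_less by blast
    moreover have "x ! \<pi> s = x ! \<pi> p" "y ! \<pi> s = y ! \<pi> p"
      using p(2) x y by (auto simp: same_columns_def)
    moreover have "x ! \<pi> s \<in> A"
      using x D_tuples \<pi>_less[OF s] nth_mem by blast
    ultimately show False
      using less irrefl by auto
  qed
  then have "p = s"
    using representative_maximal[OF p(1) s same_columns_sym[OF p(2)]] by simp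
  then obtain j where j: "j < dim" "rep_list ! j = s"
    using representative_index[OF p(1)] by blast
  show "antilex lt dim (compress x) (compress y)"
    unfolding antilex_def
  proof (intro exI conjI allI impI)
    fix j' assume "j < j' \<and> j' < dim"
    then have "s < rep_list ! j'" "rep_list ! j' < n" "j' < dim"
      using rep_list_less_iff[of j j'] j rep_list_nth_less by auto
    then show "compress x ! j' = compress y ! j'"
      using above by (simp add: nth_compress)
  qed (use less j in \<open>simp_all add: nth_compress\<close>)
next
  assume "antilex lt dim (compress x) (compress y)"
  then obtain j where j: "j < dim"
    and above: "\<And>j'. j < j' \<Longrightarrow> j' < dim \<Longrightarrow> compress x ! j' = compress y ! j'"
    and less: "lt (compress x ! j) (compress y ! j)"
    unfolding antilex_def by auto
  show "antilex lt n (permute_tuple n \<pi> x) (permute_tuple n \<pi> y)"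
    unfolding antilex_def
  proof (intro exI conjI allI impI)
    show "rep_list ! j < n"
      using rep_list_nth_less[OF j] .
    fix t assume t: "rep_list ! j < t \<and> t < n"
    obtain p where p: "p \<in> representatives" "same_columns D (\<pi> p) (\<pi> t)"
      using ex_representative \<pi>_less t by blast
    obtain j' where j': "j' < dim" "rep_list ! j' = p"
      using representative_index[OF p(1)] by blast
    have "t \<le> p"
      using representative_maximal[OF p(1) _ same_columns_sym[OF p(2)]] t by auto
    then have "j < j'"
      using rep_list_less_iff[OF j j'(1)] j' t by auto
    then have "x ! \<pi> p = y ! \<pi> p"
      using above[OF _ j'(1)] j' by (simp add: nth_compress)
    moreover have "x ! \<pi> t = x ! \<pi> p" "y ! \<pi> t = y ! \<pi> p"
      using p(2) x y by (auto simp: same_columns_def)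
    ultimately show "permute_tuple n \<pi> x ! t = permute_tuple n \<pi> y ! t"
      using t by (simp add: nth_permute_tuple)
  qed (use less j rep_list_nth_less[OF j] in \<open>simp add: nth_permute_tuple nth_compress\<close>)
qed

lemma struct_iso_restrict_pow_struct:
  assumes "alg_closed A ar F" and irrefl: "\<forall>a\<in>A. \<not> lt a a"
    and D: "sub_universe ar (pow_struct A F lt n \<pi>) D"
  shows "struct_iso ar ((pow_struct A F lt n \<pi>)\<lparr>univ := D\<rparr>) (pow_struct A F lt dim id)"
  unfolding struct_iso_def
proof (intro conjI exI[of _ compress] allI impI ballI)
  show "struct_closed ar ((pow_struct A F lt n \<pi>)\<lparr>univ := D\<rparr>)"
    using D by (simp add: struct_closed_def sub_universe_def)
  show "struct_closed ar (pow_struct A F lt dim id)"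
    using assms(1) by (rule struct_closed_pow_struct)
  show "bij_betw compress (univ ((pow_struct A F lt n \<pi>)\<lparr>univ := D\<rparr>)) (univ (pow_struct A F lt dim id))"
    using bij_betw_compress by simp
next
  fix f args assume "length args = ar f \<and> set args \<subseteq> univ ((pow_struct A F lt n \<pi>)\<lparr>univ := D\<rparr>)"
  then have "\<forall>xs\<in>set args. length xs = n"
    using D_tuples by auto
  then show "compress (ops ((pow_struct A F lt n \<pi>)\<lparr>univ := D\<rparr>) f args)
      = ops (pow_struct A F lt dim id) f (map compress args)"
    by (simp add: compress_pointwise)
next
  fix x y assume "x \<in> univ ((pow_struct A F lt n \<pi>)\<lparr>univ := D\<rparr>)"
    "y \<in> univ ((pow_struct A F lt n \<pi>)\<lparr>univ := D\<rparr>)"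
  then have xy: "x \<in> D" "y \<in> D"
    by simp_all
  then have "x = y \<longleftrightarrow> compress x = compress y"
    using inj_on_compress by (auto dest: inj_onD)
  then show "ord ((pow_struct A F lt n \<pi>)\<lparr>univ := D\<rparr>) x y
      \<longleftrightarrow> ord (pow_struct A F lt dim id) (compress x) (compress y)"
    using antilex_compress_iff[of lt, OF irrefl xy]
    by (simp add: antilex_le_perm_def permute_tuple_id length_compress)
qed

end

theorem lemma5p3:
  fixes A :: "'a set" and ar :: "'f \<Rightarrow> nat" and F :: "'f \<Rightarrow> 'a list \<Rightarrow> 'a"
    and lt :: "'a \<Rightarrow> 'a \<Rightarrow> bool" and S :: "('f, 'b) ostruct" and B :: "'b set"
  assumes "primal A ar F"
    and "lin_order_on A lt"
    and "OV_fin_object A ar F lt S"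
    and "sub_universe ar S B"
  shows "OV_fin_object A ar F lt (S\<lparr>univ := B\<rparr>)"
proof -
  obtain n \<pi> where n: "n \<ge> 1" and \<pi>: "bij_betw \<pi> {0..<n} {0..<n}"
    and S_iso: "struct_iso ar S (pow_struct A F lt n \<pi>)"
    using assms(3) unfolding OV_fin_object_def by blast
  obtain D where D: "sub_universe ar (pow_struct A F lt n \<pi>) D"
    and B_iso: "struct_iso ar (S\<lparr>univ := B\<rparr>) ((pow_struct A F lt n \<pi>)\<lparr>univ := D\<rparr>)"
    using struct_iso_sub_universe[OF S_iso assms(4)] .
  have D_tuples: "D \<subseteq> {xs. length xs = n \<and> set xs \<subseteq> A}"
    using D by (simp add: sub_universe_def)
  interpret diagonal_subset A D n \<pi>
    using \<pi> n D_tuples primal_sub_universe_pow_struct_diagonal[OF assms(1) D]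
    by unfold_locales blast+
  have "struct_iso ar ((pow_struct A F lt n \<pi>)\<lparr>univ := D\<rparr>) (pow_struct A F lt dim id)"
    using assms(1,2) D
    by (intro struct_iso_restrict_pow_struct) (simp_all add: primal_def lin_order_on_def)
  with B_iso show ?thesis
    unfolding OV_fin_object_def using dim_pos by (blast intro: struct_iso_trans)
qed

end
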